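(* Let $(U,\Phi)$ be a one-dimensional quantum walk with one defect with an initial state $\Phi\in\mathcal H_0$. Then $(U,\Phi)$ is unitary equivalent to $(U_{r,\nu},\Phi_{\alpha,\theta})$ for some $0\le r_\varepsilon,\alpha\le1$ ($\varepsilon=\pm,0$) and $\nu_i,\theta\in\mathbb R$ ($i=1,2$), where $\Phi_{\alpha,\theta}=\alpha e_1^0+e^{i\theta}\sqrt{1-\alpha^2}\,e_2^0$ and \begin{align*} U_{r,\nu}={}&|e_1^{-1}\rangle\langle r_0e_1^0+e^{i\nu_1}s_0e_2^0|+|e_2^{1}\rangle\langle -e^{i\nu_2}s_0e_1^0+e^{i(\nu_1+\nu_2)}r_0e_2^0|\\ &+\sum_{n\in\mathbb Z\setminus\{0\}}|e_1^{n-1}\rangle\langle r_\pm e_1^n+s_\pm e_2^n|+|e_2^{n+1}\rangle\langle -s_\pm e_1^n+r_\pm e_2^n|, \end{align*} with $s_\varepsilon=\sqrt{1-r_\varepsilon^2}$, $r=(r_\pm,r_0)$, $\nu=(\nu_1,\nu_2)$. Moreover, for $0<r_\varepsilon,r'_\varepsilon,\alpha,\alpha'<1$ and $\nu_i,\nu'_i,\theta,\theta'\in[0,2\pi)$, $(U_{r,\nu},\Phi_{\alpha,\theta})$ and $(U_{r',\nu'},\Phi_{\alpha',\theta'})$ are unitary equivalent if and only if $r=r'$, $\nu=\nu'$, $\alpha=\alpha'$ and $\theta=\theta'$.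
   Context: Let $\mathcal H_n=\mathbb C^2$ for $n\in\mathbb Z$, $\mathcal H=\bigoplus_{n\in\mathbb Z}\mathcal H_n$, $P_n$ the orthogonal projection onto $\mathcal H_n$, and $\{e_1^n,e_2^n\}$ the standard basis of $\mathcal H_n$; each $\mathcal H_n$ is identified with $\mathbb C^2$. Dirac notation: $|x\rangle\langle y|$ is the operator $z\mapsto\langle y,z\rangle x$ (inner product conjugate-linear in the first argument). A one-dimensional quantum walk is a unitary $U$ on $\mathcal H$ with $\operatorname{rank}(P_nUP_m)=1$ if $m=n\pm1$ and $0$ otherwise. Every such $U$ can be written as $U=\sum_{n\in\mathbb Z}|\xi_{n-1,n}\rangle\langle\zeta_{n-1,n}|+|\xi_{n+1,n}\rangle\langle\zeta_{n+1,n}|$, where $\{\xi_{n,n+1},\xi_{n+1,n}\}_{n}$ and $\{\zeta_{n,n+1},\zeta_{n+1,n}\}_{n}$ are orthonormal bases of $\mathcal H$ with $\xi_{n,n+1},\zeta_{n+1,n}\in\mathcal H_n$ and $\xi_{n+1,n},\zeta_{n,n+1}\in\mathcal H_{n+1}$. $U$ is a one-dimensional quantum walk with one defect if it has such a representation for which there exist $\xi_1,\xi_2,\zeta_1,\zeta_2\in\mathbb C^2$ with $\xi_{n,n+1}=\xi_1$, $\xi_{n,n-1}=\xi_2$, $\zeta_{n-1,n}=\zeta_1$, $\zeta_{n+1,n}=\zeta_2$ for all $n\in\mathbb Z\setminus\{0\}$. An initial state is a unit vector $\Phi\in\mathcal H_0$. Since a walk $U$ is identified with $e^{i\lambda}U$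 and a state $\Phi$ with $e^{i\lambda}\Phi$, pairs $(U,\Phi)$ and $(U',\Phi')$ are called unitary equivalent if there exist $\lambda,\lambda'\in\mathbb R$ and a unitary $W=\bigoplus_nW_n$ ($W_n$ unitary on $\mathcal H_n$) with $e^{i\lambda}WUW^*=U'$ and $e^{i\lambda'}W\Phi=\Phi'$. *)

theory Defs
  imports "HOL-Analysis.Analysis"
begin

text \<open>Each H_n is identified with complex^2 (index type 2, components 1 and 2).
  An operator U on H = (direct sum over n) H_n is represented by its blocks
  K n m = P_n U P_m, viewed as a 2x2 complex matrix mapping H_m to H_n.\<close>

type_synonym blk = "complex^2^2"
type_synonym kernel = "int \<Rightarrow> int \<Rightarrow> blk"

definition e1 :: "complex^2" where "e1 = vector [1, 0]"
definition e2 :: "complex^2" where "e2 = vector [0, 1]"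

definition cinner :: "complex^2 \<Rightarrow> complex^2 \<Rightarrow> complex" where
  "cinner x y = (\<Sum>i\<in>UNIV. cnj (x$i) * y$i)"

text \<open>Dirac notation |x><y| : z \<mapsto> <y,z> x.\<close>
definition ket_bra :: "complex^2 \<Rightarrow> complex^2 \<Rightarrow> blk" where
  "ket_bra x y = (\<chi> i j. x$i * cnj (y$j))"

definition adj :: "blk \<Rightarrow> blk" where
  "adj A = (\<chi> i j. cnj (A$j$i))"

definition cscale :: "complex \<Rightarrow> blk \<Rightarrow> blk" where
  "cscale c A = (\<chi> i j. c * A$i$j)"

definition unitary2 :: "blk \<Rightarrow> bool" where
  "unitary2 V \<longleftrightarrow> adj V ** V = mat 1 \<and> V ** adj V = mat 1"

definition orthonormal_pair :: "complex^2 \<Rightarrow> complex^2 \<Rightarrow> bool" where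
  "orthonormal_pair a b \<longleftrightarrow> cinner a a = 1 \<and> cinner b b = 1 \<and> cinner a b = 0"

definition unitary_kernel :: "kernel \<Rightarrow> bool" where
  "unitary_kernel K \<longleftrightarrow>
     (\<forall>n m. (\<Sum>\<^sub>\<infinity>k. adj (K k n) ** K k m) = (if n = m then mat 1 else 0)) \<and>
     (\<forall>n m. (\<Sum>\<^sub>\<infinity>k. K n k ** adj (K m k)) = (if n = m then mat 1 else 0))"

definition quantum_walk :: "kernel \<Rightarrow> bool" where
  "quantum_walk K \<longleftrightarrow> unitary_kernel K \<and>
     (\<forall>n m. rank (K n m) = (if m = n + 1 \<or> m = n - 1 then 1 else 0))"

text \<open>xi a b stands for \<xi>_{a,b} \<in> H_a, zeta a b for \<zeta>_{a,b} \<in> H_b (|a-b| = 1).\<close>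
definition qw_one_defect :: "kernel \<Rightarrow> bool" where
  "qw_one_defect K \<longleftrightarrow> quantum_walk K \<and>
     (\<exists>xi zeta :: int \<Rightarrow> int \<Rightarrow> complex^2.
        (\<forall>n. orthonormal_pair (xi n (n + 1)) (xi n (n - 1))) \<and>
        (\<forall>n. orthonormal_pair (zeta (n - 1) n) (zeta (n + 1) n)) \<and>
        (\<forall>a b. K a b = (if b = a + 1 \<or> b = a - 1 then ket_bra (xi a b) (zeta a b) else 0)) \<and>
        (\<exists>\<xi>1 \<xi>2 \<zeta>1 \<zeta>2. \<forall>n. n \<noteq> 0 \<longrightarrow>
            xi n (n + 1) = \<xi>1 \<and> xi n (n - 1) = \<xi>2 \<and>
            zeta (n - 1) n = \<zeta>1 \<and> zeta (n + 1) n = \<zeta>2))"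

definition unit_equiv :: "kernel \<Rightarrow> complex^2 \<Rightarrow> kernel \<Rightarrow> complex^2 \<Rightarrow> bool" where
  "unit_equiv K \<Phi> K' \<Phi>' \<longleftrightarrow>
     (\<exists>(l1::real) (l2::real) (W::int \<Rightarrow> blk). (\<forall>n. unitary2 (W n)) \<and>
        (\<forall>n m. cscale (exp (\<i> * of_real l1)) (W n ** K n m ** adj (W m)) = K' n m) \<and>
        cscale (exp (\<i> * of_real l2)) (W 0) *v \<Phi> = \<Phi>')"

definition Phi_at :: "real \<Rightarrow> real \<Rightarrow> complex^2" where
  "Phi_at \<alpha> \<theta> = vector [of_real \<alpha>, exp (\<i> * of_real \<theta>) * of_real (sqrt (1 - \<alpha>\<^sup>2))]"

definition U_std :: "real \<Rightarrow> real \<Rightarrow> real \<Rightarrow> real \<Rightarrow> kernel" where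
  "U_std rpm r0 \<nu>1 \<nu>2 a b =
    (let spm = sqrt (1 - rpm\<^sup>2); s0 = sqrt (1 - r0\<^sup>2) in
     if b = 0 then
       (if a = -1 then ket_bra e1 (vector [of_real r0, exp (\<i> * of_real \<nu>1) * of_real s0])
        else if a = 1 then ket_bra e2 (vector [- exp (\<i> * of_real \<nu>2) * of_real s0,
                                               exp (\<i> * of_real (\<nu>1 + \<nu>2)) * of_real r0])
        else 0)
     else
       (if a = b - 1 then ket_bra e1 (vector [of_real rpm, of_real spm])
        else if a = b + 1 then ket_bra e2 (vector [- of_real spm, of_real rpm])
        else 0))"

end

theory Submission
  imports Defs
begin

(* Conjugating by the
   unitary frames that send xi_{n,n+1}, xi_{n,n-1} to e1, e2 leaves a canonical form that only
   remembers the bras zeta_{n-1,n}, zeta_{n+1,n}; at each site these form an orthonormal pair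
   (r a, s b), delta (-s cnj b, r cnj a) with unimodular a, b, delta. The remaining freedom is a
   diagonal phase gauge diag (p n, q n) together with a global phase, and the resulting phase
   equations can be solved site by site: with a square root of delta as global phase all bulk bras
   become real, and only the two phases nu1, nu2 at the defect survive. The phase of the state
   gives alpha and theta. Conversely, an equivalence between two standard forms must be diagonal,
   because it maps the kets e1, e2 to multiples of themselves, and comparing entries shows that
   the moduli r_pm, r_0, alpha and the phases nu1, nu2, theta are invariants. *)

section \<open>Vectors and unit phases in complex^2\<close>

lemma cinner_expand: "cinner x y = cnj (x$1) * y$1 + cnj (x$2) * y$2"
  by (simp add: cinner_def sum_2)

lemma cinner_commute: "cinner v u = cnj (cinner u v)"
  by (simp add: cinner_expand mult.commute)

lemma cnj_mult_self: "cnj z * z = complex_of_real ((cmod z)\<^sup>2)"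
  by (metis complex_norm_square mult.commute)

lemma cnj_mult_self_eq_1_iff: "cnj z * z = 1 \<longleftrightarrow> cmod z = 1"
  using cnj_mult_self[of z] by (simp del: of_real_power) (smt (verit) norm_ge_zero power2_eq_1_iff)

lemma exp_i_Arg_unit: "cmod z = 1 \<Longrightarrow> exp (\<i> * complex_of_real (Arg z)) = z"
  using rcis_cmod_Arg[of z] by (simp add: rcis_def cis_conv_exp)

lemma exp_i_of_real_inj:
  assumes "x \<in> {0..<2*pi}" "y \<in> {0..<2*pi}" "exp (\<i> * of_real x) = exp (\<i> * of_real y)"
  shows "x = y"
proof -
  have Im: "Im (\<i> * complex_of_real t) = t" for t by simp
  have "x = Arg2pi (exp (\<i> * of_real x))"
    using Arg2pi_exp[of "\<i> * of_real x", unfolded Im] assms(1) by simp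
  also have "\<dots> = y"
    unfolding assms(3) using Arg2pi_exp[of "\<i> * of_real y", unfolded Im] assms(2) by simp
  finally show ?thesis .
qed

lemma unit_mult_of_real_eq:
  assumes "complex_of_real y = u * complex_of_real x" "cmod u = 1" "0 \<le> x" "0 \<le> y"
  shows "y = x"
proof -
  have "cmod (complex_of_real y) = cmod (u * complex_of_real x)" using assms(1) by simp
  with assms(2-4) show ?thesis by (simp add: norm_mult)
qed

lemma cinner_self_eq_norm: "cinner x x = complex_of_real ((norm x)\<^sup>2)"
proof -
  have "(norm x)\<^sup>2 = (cmod (x$1))\<^sup>2 + (cmod (x$2))\<^sup>2"
    by (simp add: norm_vec_def L2_set_def sum_2)
  then show ?thesis by (simp add: cinner_expand cnj_mult_self)
qed

lemma unit_vector_polar: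
  assumes "cinner v v = 1"
  obtains r a b where "0 \<le> r" "r \<le> 1" "cmod a = 1" "cmod b = 1"
    "v = vector [complex_of_real r * a, complex_of_real (sqrt (1 - r\<^sup>2)) * b]"
proof
  define r where "r = cmod (v$1)"
  have "complex_of_real (r\<^sup>2 + (cmod (v$2))\<^sup>2) = 1"
    using assms by (simp add: cinner_expand cnj_mult_self r_def)
  then have sq: "r\<^sup>2 + (cmod (v$2))\<^sup>2 = 1"
    by (simp only: of_real_eq_1_iff)
  show "0 \<le> r" by (simp add: r_def)
  have "r\<^sup>2 \<le> 1" using sq zero_le_power2[of "cmod (v$2)"] by linarith
  then show "r \<le> 1" using power2_le_imp_le[of r 1] by simp
  show "cmod (cis (Arg (v$1))) = 1" "cmod (cis (Arg (v$2))) = 1" by simp_all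
  have "cmod (v$2) = sqrt (1 - r\<^sup>2)"
    using sq by (simp flip: real_sqrt_unique)
  then show "v = vector [complex_of_real r * cis (Arg (v$1)),
                         complex_of_real (sqrt (1 - r\<^sup>2)) * cis (Arg (v$2))]"
    using rcis_cmod_Arg[of "v$1"] rcis_cmod_Arg[of "v$2"]
    by (simp add: vec_eq_iff forall_2 r_def rcis_def)
qed

lemma unit_vector_Phi_at:
  assumes "cinner v v = 1"
  obtains E \<alpha> \<theta> where "cmod E = 1" "0 \<le> \<alpha>" "\<alpha> \<le> 1" "E *s v = Phi_at \<alpha> \<theta>"
proof -
  obtain r a b where r: "0 \<le> r" "r \<le> 1" and ab: "cmod a = 1" "cmod b = 1"
    and v: "v = vector [complex_of_real r * a, complex_of_real (sqrt (1 - r\<^sup>2)) * b]"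
    using unit_vector_polar[OF assms] by blast
  have "cnj a * a = 1" using ab by (simp add: cnj_mult_self_eq_1_iff)
  moreover have "exp (\<i> * of_real (Arg (cnj a * b))) = cnj a * b"
    using ab by (simp add: exp_i_Arg_unit norm_mult)
  ultimately have "cnj a *s v = Phi_at r (Arg (cnj a * b))"
    by (simp add: v Phi_at_def vec_eq_iff forall_2 mult_ac)
  with r show ?thesis by (intro that[of "cnj a"]) (simp_all add: ab)
qed

lemma orthonormal_pair_complement:
  assumes "orthonormal_pair u v"
  obtains \<delta> where "cmod \<delta> = 1" "v = \<delta> *s vector [- cnj (u$2), cnj (u$1)]"
proof
  define \<delta> where "\<delta> = u$1 * v$2 - u$2 * v$1"
  have uu: "cnj (u$1) * u$1 + cnj (u$2) * u$2 = 1" and vv: "cnj (v$1) * v$1 + cnj (v$2) * v$2 = 1"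
    and uv: "cnj (u$1) * v$1 + cnj (u$2) * v$2 = 0"
    using assms by (auto simp: orthonormal_pair_def cinner_expand)
  have v1: "v$1 = - \<delta> * cnj (u$2)" and v2: "v$2 = \<delta> * cnj (u$1)"
    unfolding \<delta>_def using uu uv by algebra+
  have "cnj \<delta> * \<delta> = 1"
    using vv uu unfolding v1 v2 by simp algebra
  then show "cmod \<delta> = 1" by (simp add: cnj_mult_self_eq_1_iff)
  show "v = \<delta> *s vector [- cnj (u$2), cnj (u$1)]"
    by (simp add: vec_eq_iff forall_2 v1 v2)
qed

lemma orthonormal_pair_polar:
  assumes "orthonormal_pair u v"
  obtains r a b \<delta> where "0 \<le> r" "r \<le> 1" "cmod a = 1" "cmod b = 1" "cmod \<delta> = 1"
    "u = vector [of_real r * a, of_real (sqrt (1 - r\<^sup>2)) * b]"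
    "v = \<delta> *s vector [- (of_real (sqrt (1 - r\<^sup>2)) * cnj b), of_real r * cnj a]"
proof -
  have "cinner u u = 1" using assms by (simp add: orthonormal_pair_def)
  then obtain r a b where r: "0 \<le> r" "r \<le> 1" and ab: "cmod a = 1" "cmod b = 1"
    and u: "u = vector [of_real r * a, of_real (sqrt (1 - r\<^sup>2)) * b]"
    by (rule unit_vector_polar)
  obtain \<delta> where \<delta>: "cmod \<delta> = 1" and v: "v = \<delta> *s vector [- cnj (u$2), cnj (u$1)]"
    by (rule orthonormal_pair_complement[OF assms])
  have "v = \<delta> *s vector [- (of_real (sqrt (1 - r\<^sup>2)) * cnj b), of_real r * cnj a]"
    by (simp add: v u)
  then show ?thesis by (rule that[OF r ab \<delta> u])
qed

section \<open>Rank-one blocks and unitary 2x2 matrices\<close>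

lemma ket_bra_nth [simp]: "ket_bra x y $ i $ j = x$i * cnj (y$j)"
  by (simp add: ket_bra_def)

lemma ket_bra_conj: "W ** ket_bra x y ** adj V = ket_bra (W *v x) (V *v y)"
  by (simp add: vec_eq_iff forall_2 ket_bra_def adj_def matrix_matrix_mult_def
      matrix_vector_mult_def sum_2 algebra_simps)

lemma cscale_ket_bra: "cscale c (ket_bra x y) = ket_bra (c *s x) y"
  by (simp add: vec_eq_iff cscale_def ket_bra_def mult.assoc)

lemma ket_bra_scale_left: "ket_bra (c *s x) y = ket_bra x (cnj c *s y)"
  by (simp add: vec_eq_iff ket_bra_def mult_ac)

lemma ket_bra_e1_eq_iff: "ket_bra e1 u = ket_bra e1 w \<longleftrightarrow> u = w"
  by (simp add: vec_eq_iff forall_2 ket_bra_def e1_def)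

lemma ket_bra_e2_eq_iff: "ket_bra e2 u = ket_bra e2 w \<longleftrightarrow> u = w"
  by (simp add: vec_eq_iff forall_2 ket_bra_def e2_def)

lemma ket_bra_eq_e1_imp:
  assumes "ket_bra x y = ket_bra e1 w" "w \<noteq> 0"
  shows "x$2 = 0"
proof -
  obtain j where "w$j \<noteq> 0" using assms(2) by (auto simp: vec_eq_iff)
  moreover have "x$1 * cnj (y$j) = cnj (w$j)" "x$2 * cnj (y$j) = 0"
    using arg_cong[OF assms(1), of "\<lambda>A. A $ 1 $ j"] arg_cong[OF assms(1), of "\<lambda>A. A $ 2 $ j"]
    by (simp_all add: e1_def)
  ultimately show ?thesis by auto
qed

lemma ket_bra_eq_e2_imp:
  assumes "ket_bra x y = ket_bra e2 w" "w \<noteq> 0"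
  shows "x$1 = 0"
proof -
  obtain j where "w$j \<noteq> 0" using assms(2) by (auto simp: vec_eq_iff)
  moreover have "x$2 * cnj (y$j) = cnj (w$j)" "x$1 * cnj (y$j) = 0"
    using arg_cong[OF assms(1), of "\<lambda>A. A $ 2 $ j"] arg_cong[OF assms(1), of "\<lambda>A. A $ 1 $ j"]
    by (simp_all add: e2_def)
  ultimately show ?thesis by auto
qed

lemma adj_matrix_mul: "adj (A ** B) = adj B ** adj A"
  by (simp add: vec_eq_iff adj_def matrix_matrix_mult_def mult.commute)

lemma adj_mat_1: "adj (mat 1 :: blk) = mat 1"
  by (simp add: vec_eq_iff adj_def mat_def)

lemma cscale_1: "cscale 1 A = A"
  by (simp add: vec_eq_iff cscale_def)

lemma cscale_cscale: "cscale a (cscale b A) = cscale (a * b) A"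
  by (simp add: vec_eq_iff cscale_def mult.assoc)

lemma cscale_matrix_mul_left: "cscale c A ** B = cscale c (A ** B)"
  by (simp add: vec_eq_iff cscale_def matrix_matrix_mult_def sum_distrib_left mult.assoc)

lemma cscale_matrix_mul_right: "A ** cscale c B = cscale c (A ** B)"
  by (simp add: vec_eq_iff cscale_def matrix_matrix_mult_def sum_distrib_left mult.left_commute)

lemma cscale_mult_vector: "cscale c A *v x = c *s (A *v x)"
  by (simp add: vec_eq_iff cscale_def matrix_vector_mult_def sum_distrib_left mult.assoc)

lemma unitary2_cinner:
  assumes "unitary2 W"
  shows "cinner (W *v x) (W *v y) = cinner x y"
proof -
  have "adj W ** W = mat 1" using assms by (simp add: unitary2_def)
  then have "(adj W ** W)$i$j = mat 1 $i$j" for i j by simp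
  from this[of 1 1] this[of 1 2] this[of 2 1] this[of 2 2]
  have "cnj (W$1$1) * W$1$1 + cnj (W$2$1) * W$2$1 = 1"
    "cnj (W$1$1) * W$1$2 + cnj (W$2$1) * W$2$2 = 0"
    "cnj (W$1$2) * W$1$1 + cnj (W$2$2) * W$2$1 = 0"
    "cnj (W$1$2) * W$1$2 + cnj (W$2$2) * W$2$2 = 1"
    by (simp_all add: adj_def matrix_matrix_mult_def sum_2 mat_def)
  then show ?thesis
    unfolding cinner_expand by (simp add: matrix_vector_mult_def sum_2) algebra
qed

lemma unitary2_matrix_mul:
  assumes "unitary2 A" "unitary2 B"
  shows "unitary2 (A ** B)"
proof -
  have "adj (A ** B) ** (A ** B) = adj B ** (adj A ** A) ** B"
    and "(A ** B) ** adj (A ** B) = A ** (B ** adj B) ** adj A"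
    by (simp_all add: adj_matrix_mul matrix_mul_assoc)
  with assms show ?thesis
    by (simp add: unitary2_def matrix_mul_rid)
qed

definition frame :: "complex^2 \<Rightarrow> complex^2 \<Rightarrow> blk" where
  "frame u v = ket_bra e1 u + ket_bra e2 v"

lemma frame_mult_vector: "frame u v *v w = vector [cinner u w, cinner v w]"
  by (simp add: vec_eq_iff forall_2 frame_def ket_bra_def e1_def e2_def matrix_vector_mult_def
      sum_2 cinner_expand)

lemma frame_mult_basis:
  assumes "orthonormal_pair u v"
  shows "frame u v *v u = e1" "frame u v *v v = e2"
  using assms cinner_commute[of v u]
  by (simp_all add: frame_mult_vector orthonormal_pair_def e1_def e2_def)

lemma unitary2_frame:
  assumes "orthonormal_pair u v"
  shows "unitary2 (frame u v)"
proof -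
  obtain \<delta> where \<delta>: "cnj \<delta> * \<delta> = 1" and v: "v = \<delta> *s vector [- cnj (u$2), cnj (u$1)]"
    using orthonormal_pair_complement[OF assms] cnj_mult_self_eq_1_iff by metis
  have uu: "cnj (u$1) * u$1 + cnj (u$2) * u$2 = 1"
    using assms by (simp add: orthonormal_pair_def cinner_expand)
  show ?thesis
    unfolding unitary2_def vec_eq_iff forall_2 using \<delta> uu
    by (simp add: frame_def v ket_bra_def e1_def e2_def adj_def matrix_matrix_mult_def sum_2
        mat_def; algebra)
qed

definition diag2 :: "complex \<Rightarrow> complex \<Rightarrow> blk" where
  "diag2 p q = (\<chi> i j. if i \<noteq> j then 0 else if i = 1 then p else q)"

lemma diag2_mult_vector: "diag2 p q *v y = vector [p * y$1, q * y$2]"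
  by (simp add: vec_eq_iff forall_2 diag2_def matrix_vector_mult_def sum_2)

lemma diag2_mult_e1: "diag2 p q *v e1 = p *s e1"
  and diag2_mult_e2: "diag2 p q *v e2 = q *s e2"
  by (simp_all add: vec_eq_iff forall_2 diag2_mult_vector e1_def e2_def)

lemma unitary2_diag2_iff: "unitary2 (diag2 p q) \<longleftrightarrow> cmod p = 1 \<and> cmod q = 1"
  unfolding cnj_mult_self_eq_1_iff[symmetric]
  by (simp add: unitary2_def vec_eq_iff forall_2 diag2_def adj_def matrix_matrix_mult_def sum_2
      mat_def mult.commute)

section \<open>Unitary equivalence and the canonical form\<close>

lemma unit_equiv_phase:
  assumes "cmod c = 1"
  shows "unit_equiv K \<Psi> K (c *s \<Psi>)"
  unfolding unit_equiv_def
  using assms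
  by (intro exI[of _ 0] exI[of _ "Arg c"] exI[of _ "\<lambda>_. mat 1"])
    (simp add: unitary2_def adj_mat_1 cscale_1 matrix_mul_lid matrix_mul_rid matrix_vector_mul_lid
      cscale_mult_vector exp_i_Arg_unit)

lemma unit_equiv_refl: "unit_equiv K \<Psi> K \<Psi>"
  using unit_equiv_phase[of 1 K \<Psi>] by simp

lemma unit_equiv_trans:
  assumes "unit_equiv K \<Phi> K' \<Phi>'" "unit_equiv K' \<Phi>' K'' \<Phi>''"
  shows "unit_equiv K \<Phi> K'' \<Phi>''"
proof -
  obtain l1 l2 W where W: "\<And>n. unitary2 (W n)"
    and K': "\<And>n m. cscale (exp (\<i> * of_real l1)) (W n ** K n m ** adj (W m)) = K' n m"
    and \<Phi>': "cscale (exp (\<i> * of_real l2)) (W 0) *v \<Phi> = \<Phi>'"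
    using assms(1) unfolding unit_equiv_def by blast
  obtain l1' l2' V where V: "\<And>n. unitary2 (V n)"
    and K'': "\<And>n m. cscale (exp (\<i> * of_real l1')) (V n ** K' n m ** adj (V m)) = K'' n m"
    and \<Phi>'': "cscale (exp (\<i> * of_real l2')) (V 0) *v \<Phi>' = \<Phi>''"
    using assms(2) unfolding unit_equiv_def by blast
  show ?thesis
    unfolding unit_equiv_def
  proof (intro exI conjI allI)
    show "unitary2 (V n ** W n)" for n
      using V W by (rule unitary2_matrix_mul)
    show "cscale (exp (\<i> * of_real (l1' + l1))) ((V n ** W n) ** K n m ** adj (V m ** W m))
      = K'' n m" for n m
      by (simp add: K'[symmetric] K''[symmetric] distrib_left exp_add adj_matrix_mul
          matrix_mul_assoc cscale_matrix_mul_left cscale_matrix_mul_right cscale_cscale)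
    show "cscale (exp (\<i> * of_real (l2' + l2))) (V 0 ** W 0) *v \<Phi> = \<Phi>''"
      by (simp add: \<Phi>'[symmetric] \<Phi>''[symmetric] distrib_left exp_add cscale_mult_vector
          matrix_vector_mul_assoc[symmetric] vector_scalar_commute)
  qed
qed

text \<open>The walk with kets \<open>\<xi>\<^bsub>n-1,n\<^esub> = e1\<close>, \<open>\<xi>\<^bsub>n+1,n\<^esub> = e2\<close> and bras
  \<open>\<zeta>\<^bsub>n-1,n\<^esub> = y n\<close>, \<open>\<zeta>\<^bsub>n+1,n\<^esub> = z n\<close>.\<close>

definition canonical_walk :: "(int \<Rightarrow> complex^2) \<Rightarrow> (int \<Rightarrow> complex^2) \<Rightarrow> kernel" where
  "canonical_walk y z a b =
     (if a = b - 1 then ket_bra e1 (y b) else if a = b + 1 then ket_bra e2 (z b) else 0)"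

lemma canonical_walk_inject:
  assumes "canonical_walk y z = canonical_walk y' z'"
  shows "y = y'" "z = z'"
proof -
  have "canonical_walk y z (n - 1) n = canonical_walk y' z' (n - 1) n"
    and "canonical_walk y z (n + 1) n = canonical_walk y' z' (n + 1) n" for n
    using assms by simp_all
  then show "y = y'" "z = z'"
    by (auto simp: canonical_walk_def ket_bra_e1_eq_iff ket_bra_e2_eq_iff)
qed

lemma one_defect_unit_equiv_canonical_walk:
  assumes "qw_one_defect U" "norm \<Phi> = 1"
  obtains y z \<Psi> where "\<forall>n. orthonormal_pair (y n) (z n)" "\<forall>n. n \<noteq> 0 \<longrightarrow> y n = y 1 \<and> z n = z 1"
    "cinner \<Psi> \<Psi> = 1" "unit_equiv U \<Phi> (canonical_walk y z) \<Psi>"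
proof -
  obtain xi zeta \<xi>1 \<xi>2 \<zeta>1 \<zeta>2 where
    xi: "\<And>n. orthonormal_pair (xi n (n + 1)) (xi n (n - 1))" and
    zeta: "\<And>n. orthonormal_pair (zeta (n - 1) n) (zeta (n + 1) n)" and
    U: "\<And>a b. U a b = (if b = a + 1 \<or> b = a - 1 then ket_bra (xi a b) (zeta a b) else 0)" and
    bulk: "\<And>n. n \<noteq> 0 \<Longrightarrow> xi n (n + 1) = \<xi>1 \<and> xi n (n - 1) = \<xi>2 \<and>
                           zeta (n - 1) n = \<zeta>1 \<and> zeta (n + 1) n = \<zeta>2"
    using assms(1) unfolding qw_one_defect_def by blast
  define F where "F n = frame (xi n (n + 1)) (xi n (n - 1))" for n
  define y where "y n = F n *v zeta (n - 1) n" for n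
  define z where "z n = F n *v zeta (n + 1) n" for n
  have F: "unitary2 (F n)" for n
    unfolding F_def using xi by (rule unitary2_frame)
  have "orthonormal_pair (y n) (z n)" for n
    using zeta[of n] by (simp add: orthonormal_pair_def y_def z_def unitary2_cinner[OF F])
  moreover have "y n = y 1 \<and> z n = z 1" if "n \<noteq> 0" for n
    using bulk[OF that] bulk[of 1] by (simp add: y_def z_def F_def)
  moreover have "cinner (F 0 *v \<Phi>) (F 0 *v \<Phi>) = 1"
    using assms(2) unitary2_cinner[OF F, of 0 \<Phi> \<Phi>] by (simp add: cinner_self_eq_norm[of \<Phi>])
  moreover have "cscale 1 (F a ** U a b ** adj (F b)) = canonical_walk y z a b" for a b
  proof -
    have "F a *v xi a (a + 1) = e1" "F a *v xi a (a - 1) = e2"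
      unfolding F_def using frame_mult_basis[OF xi] by blast+
    then show ?thesis
      by (auto simp: U canonical_walk_def cscale_1 ket_bra_conj y_def z_def)
  qed
  then have "unit_equiv U \<Phi> (canonical_walk y z) (F 0 *v \<Phi>)"
    unfolding unit_equiv_def using F
    by (intro exI[of _ 0] exI[of _ F] conjI) (auto simp: cscale_1)
  ultimately show ?thesis using that by blast
qed

lemma diag2_conj_canonical_walk:
  "cscale E (diag2 (p a) (q a) ** canonical_walk y z a b ** adj (diag2 (p b) (q b))) =
   canonical_walk (\<lambda>n. cnj (E * p (n - 1)) *s (diag2 (p n) (q n) *v y n))
                  (\<lambda>n. cnj (E * q (n + 1)) *s (diag2 (p n) (q n) *v z n)) a b"
  by (simp add: canonical_walk_def ket_bra_conj cscale_ket_bra diag2_mult_e1 diag2_mult_e2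
      vector_smult_assoc ket_bra_scale_left)
    (simp add: vec_eq_iff cscale_def)

lemma canonical_walk_diag_gauge:
  assumes "cmod E = 1" "cmod E' = 1" "\<forall>n. cmod (p n) = 1 \<and> cmod (q n) = 1"
  shows "unit_equiv (canonical_walk y z) \<Psi>
     (canonical_walk (\<lambda>n. cnj (E * p (n - 1)) *s (diag2 (p n) (q n) *v y n))
                     (\<lambda>n. cnj (E * q (n + 1)) *s (diag2 (p n) (q n) *v z n)))
     (E' *s (diag2 (p 0) (q 0) *v \<Psi>))"
  unfolding unit_equiv_def
  using assms
  by (intro exI[of _ "Arg E"] exI[of _ "Arg E'"] exI[of _ "\<lambda>n. diag2 (p n) (q n)"])
    (simp add: exp_i_Arg_unit unitary2_diag2_iff diag2_conj_canonical_walk cscale_mult_vector)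

lemma canonical_walk_conj_diagonal:
  assumes "cscale E (W n ** canonical_walk y z n (n + 1) ** adj (W (n + 1)))
            = canonical_walk y' z' n (n + 1)"
    and "cscale E (W n ** canonical_walk y z n (n - 1) ** adj (W (n - 1)))
            = canonical_walk y' z' n (n - 1)"
    and "E \<noteq> 0" "y' (n + 1) \<noteq> 0" "z' (n - 1) \<noteq> 0"
  shows "W n = diag2 (W n $ 1 $ 1) (W n $ 2 $ 2)"
proof -
  have "ket_bra (E *s (W n *v e1)) (W (n + 1) *v y (n + 1)) = ket_bra e1 (y' (n + 1))"
    using assms(1) by (simp add: canonical_walk_def ket_bra_conj cscale_ket_bra)
  then have "(E *s (W n *v e1)) $ 2 = 0" using ket_bra_eq_e1_imp assms(4) by blast
  moreover have "ket_bra (E *s (W n *v e2)) (W (n - 1) *v z (n - 1)) = ket_bra e2 (z' (n - 1))"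
    using assms(2) by (simp add: canonical_walk_def ket_bra_conj cscale_ket_bra)
  then have "(E *s (W n *v e2)) $ 1 = 0" using ket_bra_eq_e2_imp assms(5) by blast
  ultimately show ?thesis
    using assms(3)
    by (simp add: vec_eq_iff forall_2 diag2_def matrix_vector_mult_def sum_2 e1_def e2_def)
qed

lemma unit_equiv_canonical_walk_diag:
  assumes "unit_equiv (canonical_walk y z) \<Psi> (canonical_walk y' z') \<Psi>'"
    and "\<forall>n. y' n \<noteq> 0" "\<forall>n. z' n \<noteq> 0"
  obtains E E' p q where "cmod E = 1" "cmod E' = 1" "\<forall>n. cmod (p n) = 1 \<and> cmod (q n) = 1"
    "y' = (\<lambda>n. cnj (E * p (n - 1)) *s (diag2 (p n) (q n) *v y n))"
    "z' = (\<lambda>n. cnj (E * q (n + 1)) *s (diag2 (p n) (q n) *v z n))"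
    "\<Psi>' = E' *s (diag2 (p 0) (q 0) *v \<Psi>)"
proof -
  obtain l1 l2 W where W: "\<And>n. unitary2 (W n)"
    and K: "\<And>n m. cscale (exp (\<i> * of_real l1)) (W n ** canonical_walk y z n m ** adj (W m))
                    = canonical_walk y' z' n m"
    and \<Psi>': "cscale (exp (\<i> * of_real l2)) (W 0) *v \<Psi> = \<Psi>'"
    using assms(1) unfolding unit_equiv_def by blast
  define E where "E = exp (\<i> * complex_of_real l1)"
  define p where "p n = W n $ 1 $ 1" for n
  define q where "q n = W n $ 2 $ 2" for n
  have W_diag: "W n = diag2 (p n) (q n)" for n
    unfolding p_def q_def using assms(2,3)
    by (intro canonical_walk_conj_diagonal[OF K K]) simp_all
  have "canonical_walk y' z' = canonical_walk
          (\<lambda>n. cnj (E * p (n - 1)) *s (diag2 (p n) (q n) *v y n))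
          (\<lambda>n. cnj (E * q (n + 1)) *s (diag2 (p n) (q n) *v z n))"
    by (intro ext) (simp add: W_diag E_def diag2_conj_canonical_walk flip: K)
  from canonical_walk_inject[OF this] show ?thesis
    using that[of E "exp (\<i> * of_real l2)" p q] W \<Psi>'
    by (simp add: E_def W_diag cscale_mult_vector unitary2_diag2_iff)
qed

section \<open>The standard form\<close>

definition std_zeta_minus :: "real \<Rightarrow> real \<Rightarrow> real \<Rightarrow> int \<Rightarrow> complex^2" where
  "std_zeta_minus rpm r0 \<nu>1 n =
     (if n = 0 then vector [of_real r0, exp (\<i> * of_real \<nu>1) * of_real (sqrt (1 - r0\<^sup>2))]
      else vector [of_real rpm, of_real (sqrt (1 - rpm\<^sup>2))])"

definition std_zeta_plus :: "real \<Rightarrow> real \<Rightarrow> real \<Rightarrow> real \<Rightarrow> int \<Rightarrow> complex^2" where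
  "std_zeta_plus rpm r0 \<nu>1 \<nu>2 n =
     (if n = 0 then vector [- exp (\<i> * of_real \<nu>2) * of_real (sqrt (1 - r0\<^sup>2)),
                            exp (\<i> * of_real (\<nu>1 + \<nu>2)) * of_real r0]
      else vector [- of_real (sqrt (1 - rpm\<^sup>2)), of_real rpm])"

lemma U_std_eq_canonical_walk:
  "U_std rpm r0 \<nu>1 \<nu>2 = canonical_walk (std_zeta_minus rpm r0 \<nu>1) (std_zeta_plus rpm r0 \<nu>1 \<nu>2)"
  by (simp add: fun_eq_iff U_std_def canonical_walk_def std_zeta_minus_def std_zeta_plus_def
      Let_def)

lemma std_zeta_minus_nonzero: "std_zeta_minus rpm r0 \<nu>1 n \<noteq> 0"
  and std_zeta_plus_nonzero: "std_zeta_plus rpm r0 \<nu>1 \<nu>2 n \<noteq> 0"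
  by (auto simp: std_zeta_minus_def std_zeta_plus_def vec_eq_iff forall_2)

lemma phase_sequence_with_defect:
  assumes "cmod \<omega> = 1" "cmod \<beta> = 1"
  obtains P :: "int \<Rightarrow> complex" where "\<forall>n. cmod (P n) = 1" "\<And>n. n \<noteq> 0 \<Longrightarrow> P n = \<omega> * P (n - 1)"
    "P 0 = 1" "\<omega> * P (-1) = \<beta>"
proof
  define P where "P n = (if 0 \<le> n then \<omega> powi n else \<beta> * \<omega> powi n)" for n
  have step: "\<omega> powi n = \<omega> * \<omega> powi (n - 1)" for n
    using power_int_add_1'[of \<omega> "n - 1"] assms(1) by (cases "\<omega> = 0") auto
  show "\<forall>n. cmod (P n) = 1"
    using assms by (simp add: P_def norm_power_int norm_mult)
  show "P n = \<omega> * P (n - 1)" if "n \<noteq> 0" for n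
    using that step[of n] by (auto simp: P_def)
  show "P 0 = 1" by (simp add: P_def)
  show "\<omega> * P (-1) = \<beta>"
    using step[of 0] by (simp add: P_def)
qed

text \<open>With \<open>E\<close> a square root of \<open>\<delta>\<close>, the bulk equations force \<open>p n = cnj a * E * p (n - 1)\<close>
  and \<open>q n = a * cnj b * p n\<close>; the defect only shifts the phase of \<open>p\<close> on the negative
  half-line (by \<open>cnj a * a0\<close>) and of \<open>q 0\<close>.\<close>

lemma defect_phase_gauge:
  assumes "cmod a = 1" "cmod b = 1" "cmod \<delta> = 1" "cmod a0 = 1" "cmod b0 = 1" "cmod \<delta>0 = 1"
  obtains E :: complex and p q :: "int \<Rightarrow> complex" and \<nu>1 \<nu>2 :: real
  where "cmod E = 1" "\<forall>n. cmod (p n) = 1 \<and> cmod (q n) = 1"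
    "\<And>n. n \<noteq> 0 \<Longrightarrow> cnj (E * p (n - 1)) * p n * a = 1"
    "\<And>n. n \<noteq> 0 \<Longrightarrow> cnj (E * p (n - 1)) * q n * b = 1"
    "\<And>n. n \<noteq> 0 \<Longrightarrow> cnj (E * q (n + 1)) * p n * \<delta> * cnj b = 1"
    "\<And>n. n \<noteq> 0 \<Longrightarrow> cnj (E * q (n + 1)) * q n * \<delta> * cnj a = 1"
    "cnj (E * p (-1)) * p 0 * a0 = 1"
    "cnj (E * p (-1)) * q 0 * b0 = exp (\<i> * of_real \<nu>1)"
    "cnj (E * q 1) * p 0 * \<delta>0 * cnj b0 = exp (\<i> * of_real \<nu>2)"
    "cnj (E * q 1) * q 0 * \<delta>0 * cnj a0 = exp (\<i> * of_real (\<nu>1 + \<nu>2))"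
proof -
  define \<gamma> where "\<gamma> = csqrt \<delta>"
  have \<gamma>: "\<gamma> * \<gamma> = \<delta>" "cmod \<gamma> = 1"
    using assms(3) by (simp_all add: \<gamma>_def flip: power2_eq_square)
  define \<omega> \<kappa> \<beta> where "\<omega> = cnj a * \<gamma>" and "\<kappa> = a * cnj b" and "\<beta> = cnj a * a0"
  have \<omega>: "cmod \<omega> = 1" and "cmod \<beta> = 1"
    using assms \<gamma> by (simp_all add: \<omega>_def \<beta>_def norm_mult)
  then obtain P :: "int \<Rightarrow> complex" where P: "\<forall>n. cmod (P n) = 1" "\<And>n. n \<noteq> 0 \<Longrightarrow> P n = \<omega> * P (n - 1)"
    and P0: "P 0 = 1" and Pm1: "\<omega> * P (-1) = \<beta>"
    using phase_sequence_with_defect by blast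
  define Q where "Q n = (if n = 0 then \<beta> * \<kappa> else \<kappa> * P n)" for n
  have Q_succ: "Q (n + 1) = \<kappa> * \<omega> * P n" for n
    using P(2)[of "n + 1"] Pm1 by (cases "n = -1") (auto simp: Q_def)
  have units: "cnj a * a = 1" "cnj b * b = 1" "cnj \<gamma> * \<gamma> = 1" "cnj a0 * a0 = 1" "cnj b0 * b0 = 1"
    "cnj \<delta>0 * \<delta>0 = 1"
    using assms \<gamma> by (simp_all add: cnj_mult_self_eq_1_iff)
  have P_unit: "cnj (P n) * P n = 1" for n
    using P(1) by (simp add: cnj_mult_self_eq_1_iff)
  have cnj_\<gamma>: "cnj \<gamma> * cnj \<gamma> = cnj \<delta>"
    using arg_cong[OF \<gamma>(1), of cnj] by simp
  define N1 N2 where "N1 = cnj b * b0" and "N2 = cnj \<delta> * \<delta>0 * b * cnj b0"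
  have N: "exp (\<i> * of_real (Arg N1)) = N1" "exp (\<i> * of_real (Arg N2)) = N2"
    using assms by (simp_all add: N1_def N2_def exp_i_Arg_unit norm_mult)
  show ?thesis
  proof (rule that[of \<gamma> P Q "Arg N1" "Arg N2"])
    show "cmod \<gamma> = 1" by (fact \<gamma>(2))
    show "\<forall>n. cmod (P n) = 1 \<and> cmod (Q n) = 1"
      using assms P(1) by (simp add: Q_def \<beta>_def \<kappa>_def norm_mult)
  next
    fix n :: int assume "n \<noteq> 0"
    show "cnj (\<gamma> * P (n - 1)) * P n * a = 1" "cnj (\<gamma> * P (n - 1)) * Q n * b = 1"
      using units P_unit[of "n - 1"]
      by (simp_all add: P(2) Q_def \<omega>_def \<kappa>_def \<open>n \<noteq> 0\<close>) algebra+
    have "Q n = \<kappa> * P n" by (simp add: Q_def \<open>n \<noteq> 0\<close>)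
    then show "cnj (\<gamma> * Q (n + 1)) * P n * \<delta> * cnj b = 1"
      "cnj (\<gamma> * Q (n + 1)) * Q n * \<delta> * cnj a = 1"
      using units P_unit[of n] \<gamma>(1) cnj_\<gamma>
      by (simp_all add: Q_succ \<omega>_def \<kappa>_def) algebra+
  next
    have Q0: "Q 0 = \<beta> * \<kappa>" and Q1: "Q 1 = \<kappa> * \<omega>"
      using Q_succ[of 0] P0 by (simp_all add: Q_def)
    have Pm1': "P (-1) = cnj \<omega> * \<beta>"
      using Pm1 \<omega> by (metis cnj_mult_self_eq_1_iff mult.assoc mult_1_left)
    show "cnj (\<gamma> * P (-1)) * P 0 * a0 = 1"
      "cnj (\<gamma> * P (-1)) * Q 0 * b0 = exp (\<i> * of_real (Arg N1))"
      unfolding N using units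
      by (simp_all add: Pm1' P0 Q_def \<omega>_def \<beta>_def \<kappa>_def N1_def) algebra+
    show "cnj (\<gamma> * Q 1) * P 0 * \<delta>0 * cnj b0 = exp (\<i> * of_real (Arg N2))"
      "cnj (\<gamma> * Q 1) * Q 0 * \<delta>0 * cnj a0 = exp (\<i> * of_real (Arg N1 + Arg N2))"
      unfolding of_real_add distrib_left exp_add N using units \<gamma>(1) cnj_\<gamma>
      by (simp_all only: Q0 Q1 P0 \<omega>_def \<beta>_def \<kappa>_def N1_def N2_def complex_cnj_mult
          complex_cnj_cnj mult_1_right) algebra+
  qed
qed

lemma canonical_walk_unit_equiv_U_std:
  assumes zeta: "\<forall>n. orthonormal_pair (y n) (z n)"
    and bulk: "\<forall>n. n \<noteq> 0 \<longrightarrow> y n = y 1 \<and> z n = z 1"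
    and \<Psi>: "cinner \<Psi> \<Psi> = 1"
  obtains rpm r0 \<nu>1 \<nu>2 \<Psi>' where "0 \<le> rpm" "rpm \<le> 1" "0 \<le> r0" "r0 \<le> 1" "cinner \<Psi>' \<Psi>' = 1"
    "unit_equiv (canonical_walk y z) \<Psi> (U_std rpm r0 \<nu>1 \<nu>2) \<Psi>'"
proof -
  obtain r a b \<delta> where r: "0 \<le> r" "r \<le> 1" and units: "cmod a = 1" "cmod b = 1" "cmod \<delta> = 1"
    and y1: "y 1 = vector [of_real r * a, of_real (sqrt (1 - r\<^sup>2)) * b]"
    and z1: "z 1 = \<delta> *s vector [- (of_real (sqrt (1 - r\<^sup>2)) * cnj b), of_real r * cnj a]"
    using zeta by (elim allE orthonormal_pair_polar)
  obtain r0 a0 b0 \<delta>0 where r0: "0 \<le> r0" "r0 \<le> 1"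
    and units0: "cmod a0 = 1" "cmod b0 = 1" "cmod \<delta>0 = 1"
    and y0: "y 0 = vector [of_real r0 * a0, of_real (sqrt (1 - r0\<^sup>2)) * b0]"
    and z0: "z 0 = \<delta>0 *s vector [- (of_real (sqrt (1 - r0\<^sup>2)) * cnj b0), of_real r0 * cnj a0]"
    using zeta by (elim allE orthonormal_pair_polar)
  obtain E :: complex and p q :: "int \<Rightarrow> complex" and \<nu>1 \<nu>2 :: real
    where E: "cmod E = 1" and pq: "\<forall>n. cmod (p n) = 1 \<and> cmod (q n) = 1"
    and minus: "\<And>n. n \<noteq> 0 \<Longrightarrow> cnj (E * p (n - 1)) * p n * a = 1"
      "\<And>n. n \<noteq> 0 \<Longrightarrow> cnj (E * p (n - 1)) * q n * b = 1"
    and plus: "\<And>n. n \<noteq> 0 \<Longrightarrow> cnj (E * q (n + 1)) * p n * \<delta> * cnj b = 1"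
      "\<And>n. n \<noteq> 0 \<Longrightarrow> cnj (E * q (n + 1)) * q n * \<delta> * cnj a = 1"
    and minus0: "cnj (E * p (-1)) * p 0 * a0 = 1"
      "cnj (E * p (-1)) * q 0 * b0 = exp (\<i> * of_real \<nu>1)"
    and plus0: "cnj (E * q 1) * p 0 * \<delta>0 * cnj b0 = exp (\<i> * of_real \<nu>2)"
      "cnj (E * q 1) * q 0 * \<delta>0 * cnj a0 = exp (\<i> * of_real (\<nu>1 + \<nu>2))"
    using defect_phase_gauge[OF units(1,2,3) units0(1,2,3)] by blast
  have "cnj (E * p (n - 1)) *s (diag2 (p n) (q n) *v y n) = std_zeta_minus r r0 \<nu>1 n \<and>
        cnj (E * q (n + 1)) *s (diag2 (p n) (q n) *v z n) = std_zeta_plus r r0 \<nu>1 \<nu>2 n" for n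
  proof (cases "n = 0")
    case True with minus0 plus0 show ?thesis
      by (simp add: y0 z0 diag2_mult_vector std_zeta_minus_def std_zeta_plus_def vec_eq_iff forall_2
          mult.assoc)
  next
    case False with minus[OF False] plus[OF False] bulk show ?thesis
      by (simp add: y1 z1 diag2_mult_vector std_zeta_minus_def std_zeta_plus_def vec_eq_iff forall_2
          mult.assoc)
  qed
  then have "(\<lambda>n. cnj (E * p (n - 1)) *s (diag2 (p n) (q n) *v y n)) = std_zeta_minus r r0 \<nu>1"
    and "(\<lambda>n. cnj (E * q (n + 1)) *s (diag2 (p n) (q n) *v z n)) = std_zeta_plus r r0 \<nu>1 \<nu>2"
    by auto
  moreover have "cinner (diag2 (p 0) (q 0) *v \<Psi>) (diag2 (p 0) (q 0) *v \<Psi>) = 1"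
    using \<Psi> pq by (simp add: unitary2_cinner unitary2_diag2_iff)
  ultimately show ?thesis
    using that[OF r r0] canonical_walk_diag_gauge[OF E _ pq, of 1 y z \<Psi>]
    by (simp add: U_std_eq_canonical_walk)
qed

lemma qw_one_defect_unit_equiv_U_std:
  assumes "qw_one_defect U" "norm \<Phi> = 1"
  shows "\<exists>rpm r0 \<alpha> \<nu>1 \<nu>2 \<theta>. 0 \<le> rpm \<and> rpm \<le> 1 \<and> 0 \<le> r0 \<and> r0 \<le> 1 \<and> 0 \<le> \<alpha> \<and> \<alpha> \<le> 1 \<and>
           unit_equiv U \<Phi> (U_std rpm r0 \<nu>1 \<nu>2) (Phi_at \<alpha> \<theta>)"
proof -
  obtain y z \<Psi> where zeta: "\<forall>n. orthonormal_pair (y n) (z n)"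
    and bulk: "\<forall>n. n \<noteq> 0 \<longrightarrow> y n = y 1 \<and> z n = z 1" and \<Psi>: "cinner \<Psi> \<Psi> = 1"
    and U: "unit_equiv U \<Phi> (canonical_walk y z) \<Psi>"
    by (rule one_defect_unit_equiv_canonical_walk[OF assms])
  obtain rpm r0 \<nu>1 \<nu>2 \<Psi>' where r: "0 \<le> rpm" "rpm \<le> 1" "0 \<le> r0" "r0 \<le> 1"
    and \<Psi>': "cinner \<Psi>' \<Psi>' = 1" and std: "unit_equiv (canonical_walk y z) \<Psi> (U_std rpm r0 \<nu>1 \<nu>2) \<Psi>'"
    by (rule canonical_walk_unit_equiv_U_std[OF zeta bulk \<Psi>])
  obtain E \<alpha> \<theta> where E: "cmod E = 1" and \<alpha>: "0 \<le> \<alpha>" "\<alpha> \<le> 1" and \<Phi>': "E *s \<Psi>' = Phi_at \<alpha> \<theta>"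
    by (rule unit_vector_Phi_at[OF \<Psi>'])
  have "unit_equiv U \<Phi> (U_std rpm r0 \<nu>1 \<nu>2) (E *s \<Psi>')"
    using unit_equiv_trans[OF unit_equiv_trans[OF U std] unit_equiv_phase[OF E]] .
  with r \<alpha> show ?thesis
    unfolding \<Phi>' by blast
qed

lemma U_std_unit_equiv_gauge:
  assumes "unit_equiv (U_std rpm r0 \<nu>1 \<nu>2) (Phi_at \<alpha> \<theta>) (U_std rpm' r0' \<nu>1' \<nu>2') (Phi_at \<alpha>' \<theta>')"
  obtains E E' :: complex and p q :: "int \<Rightarrow> complex"
  where "cmod E = 1" "cmod E' = 1" "\<forall>n. cmod (p n) = 1 \<and> cmod (q n) = 1"
    "\<forall>n i. std_zeta_minus rpm' r0' \<nu>1' n $ i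
            = cnj (E * p (n - 1)) * (diag2 (p n) (q n) *v std_zeta_minus rpm r0 \<nu>1 n) $ i"
    "\<forall>n i. std_zeta_plus rpm' r0' \<nu>1' \<nu>2' n $ i
            = cnj (E * q (n + 1)) * (diag2 (p n) (q n) *v std_zeta_plus rpm r0 \<nu>1 \<nu>2 n) $ i"
    "\<forall>i. Phi_at \<alpha>' \<theta>' $ i = E' * (diag2 (p 0) (q 0) *v Phi_at \<alpha> \<theta>) $ i"
proof -
  have "\<forall>n. std_zeta_minus rpm' r0' \<nu>1' n \<noteq> 0" "\<forall>n. std_zeta_plus rpm' r0' \<nu>1' \<nu>2' n \<noteq> 0"
    by (simp_all add: std_zeta_minus_nonzero std_zeta_plus_nonzero)
  with assms obtain E E' :: complex and p q :: "int \<Rightarrow> complex"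
    where units: "cmod E = 1" "cmod E' = 1" "\<forall>n. cmod (p n) = 1 \<and> cmod (q n) = 1"
    and minus: "std_zeta_minus rpm' r0' \<nu>1'
      = (\<lambda>n. cnj (E * p (n - 1)) *s (diag2 (p n) (q n) *v std_zeta_minus rpm r0 \<nu>1 n))"
    and plus: "std_zeta_plus rpm' r0' \<nu>1' \<nu>2'
      = (\<lambda>n. cnj (E * q (n + 1)) *s (diag2 (p n) (q n) *v std_zeta_plus rpm r0 \<nu>1 \<nu>2 n))"
    and state: "Phi_at \<alpha>' \<theta>' = E' *s (diag2 (p 0) (q 0) *v Phi_at \<alpha> \<theta>)"
    unfolding U_std_eq_canonical_walk by (rule unit_equiv_canonical_walk_diag)
  show ?thesis
    by (rule that[OF units]) (simp_all add: minus plus state)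
qed

lemma U_std_unit_equiv_moduli_eq:
  assumes "0 \<le> rpm" "0 \<le> r0" "0 \<le> \<alpha>" "0 \<le> rpm'" "0 \<le> r0'" "0 \<le> \<alpha>'"
    and "unit_equiv (U_std rpm r0 \<nu>1 \<nu>2) (Phi_at \<alpha> \<theta>) (U_std rpm' r0' \<nu>1' \<nu>2') (Phi_at \<alpha>' \<theta>')"
  shows "rpm' = rpm" "r0' = r0" "\<alpha>' = \<alpha>"
proof -
  obtain E E' :: complex and p q :: "int \<Rightarrow> complex"
    where units: "cmod E = 1" "cmod E' = 1" "\<forall>n. cmod (p n) = 1 \<and> cmod (q n) = 1"
    and minus: "\<forall>n i. std_zeta_minus rpm' r0' \<nu>1' n $ i
      = cnj (E * p (n - 1)) * (diag2 (p n) (q n) *v std_zeta_minus rpm r0 \<nu>1 n) $ i"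
    and "\<forall>n i. std_zeta_plus rpm' r0' \<nu>1' \<nu>2' n $ i
      = cnj (E * q (n + 1)) * (diag2 (p n) (q n) *v std_zeta_plus rpm r0 \<nu>1 \<nu>2 n) $ i"
    and state: "\<forall>i. Phi_at \<alpha>' \<theta>' $ i = E' * (diag2 (p 0) (q 0) *v Phi_at \<alpha> \<theta>) $ i"
    by (rule U_std_unit_equiv_gauge[OF assms(7)])
  have "of_real rpm' = cnj (E * p 0) * p 1 * of_real rpm"
    using minus[rule_format, of 1 1] by (simp add: std_zeta_minus_def diag2_mult_vector)
  then show "rpm' = rpm"
    by (rule unit_mult_of_real_eq) (use units assms in \<open>simp_all add: norm_mult\<close>)
  have "of_real r0' = cnj (E * p (-1)) * p 0 * of_real r0"
    using minus[rule_format, of 0 1] by (simp add: std_zeta_minus_def diag2_mult_vector)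
  then show "r0' = r0"
    by (rule unit_mult_of_real_eq) (use units assms in \<open>simp_all add: norm_mult\<close>)
  have "of_real \<alpha>' = E' * p 0 * of_real \<alpha>"
    using state[rule_format, of 1] by (simp add: Phi_at_def diag2_mult_vector)
  then show "\<alpha>' = \<alpha>"
    by (rule unit_mult_of_real_eq) (use units assms in \<open>simp_all add: norm_mult\<close>)
qed

text \<open>The bulk equations at the sites 1 and 2 force \<open>E\<^sup>2 = 1\<close>, after which the gauge factors
  at the defect cancel.\<close>

lemma defect_phases_gauge_invariant:
  assumes units: "cmod E = 1" "\<forall>n. cmod (p n) = 1 \<and> cmod (q n) = 1"
    and bulk: "cnj (E * p 1) * q 2 = 1" "cnj (E * q 2) * p 1 = 1"
      "cnj (E * p 0) * q 1 = 1" "cnj (E * q 0) * p (-1) = 1"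
    and defect: "cnj (E * p (-1)) * p 0 = 1"
      "N1' = cnj (E * p (-1)) * q 0 * N1" "N2' = cnj (E * q 1) * p 0 * N2"
    and state: "E' * p 0 = 1" "T' = E' * q 0 * T"
  shows "N1' = N1" "N2' = N2" "T' = T"
proof -
  have E: "cnj E * E = 1" and pq: "cnj (p n) * p n = 1" "cnj (q n) * q n = 1" for n
    using units by (simp_all add: cnj_mult_self_eq_1_iff)
  have E2: "cnj E * cnj E = 1"
    using bulk(1,2) pq[of 1] pq[of 2] by simp algebra
  show "N1' = N1"
    using defect(2) bulk(4) E E2 pq[of 0] pq[of "-1"] by simp algebra
  show "N2' = N2"
    using defect(3) bulk(3) E E2 pq[of 0] pq[of 1] by simp algebra
  show "T' = T"
    using state defect(1) bulk(4) E E2 pq[of 0] pq[of "-1"] by simp algebra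
qed

text \<open>Off the defect only the entries \<open>sqrt (1 - rpm\<^sup>2)\<close> are compared.\<close>

lemma U_std_unit_equiv_imp_eq:
  assumes "0 \<le> rpm" "rpm < 1" "0 < r0" "r0 < 1" "0 < \<alpha>" "\<alpha> < 1" "0 \<le> rpm'" "0 \<le> r0'" "0 \<le> \<alpha>'"
    and angles: "\<nu>1 \<in> {0..<2*pi}" "\<nu>2 \<in> {0..<2*pi}" "\<theta> \<in> {0..<2*pi}"
      "\<nu>1' \<in> {0..<2*pi}" "\<nu>2' \<in> {0..<2*pi}" "\<theta>' \<in> {0..<2*pi}"
    and equiv: "unit_equiv (U_std rpm r0 \<nu>1 \<nu>2) (Phi_at \<alpha> \<theta>)
                           (U_std rpm' r0' \<nu>1' \<nu>2') (Phi_at \<alpha>' \<theta>')"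
  shows "rpm = rpm' \<and> r0 = r0' \<and> \<nu>1 = \<nu>1' \<and> \<nu>2 = \<nu>2' \<and> \<alpha> = \<alpha>' \<and> \<theta> = \<theta>'"
proof -
  have moduli: "rpm' = rpm" "r0' = r0" "\<alpha>' = \<alpha>"
    using U_std_unit_equiv_moduli_eq[OF _ _ _ _ _ _ equiv] assms by simp_all
  obtain E E' :: complex and p q :: "int \<Rightarrow> complex"
    where units: "cmod E = 1" "cmod E' = 1" "\<forall>n. cmod (p n) = 1 \<and> cmod (q n) = 1"
    and minus: "\<forall>n i. std_zeta_minus rpm r0 \<nu>1' n $ i
      = cnj (E * p (n - 1)) * (diag2 (p n) (q n) *v std_zeta_minus rpm r0 \<nu>1 n) $ i"
    and plus: "\<forall>n i. std_zeta_plus rpm r0 \<nu>1' \<nu>2' n $ i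
      = cnj (E * q (n + 1)) * (diag2 (p n) (q n) *v std_zeta_plus rpm r0 \<nu>1 \<nu>2 n) $ i"
    and state: "\<forall>i. Phi_at \<alpha> \<theta>' $ i = E' * (diag2 (p 0) (q 0) *v Phi_at \<alpha> \<theta>) $ i"
    by (rule U_std_unit_equiv_gauge[OF equiv[unfolded moduli]])
  have s: "sqrt (1 - x\<^sup>2) \<noteq> 0" if "0 \<le> x" "x < 1" for x :: real
    using that by (simp add: power2_eq_1_iff)
  note minus_at = minus[rule_format] and plus_at = plus[rule_format]
    and state_at = state[rule_format]
  note simps = std_zeta_minus_def std_zeta_plus_def Phi_at_def diag2_mult_vector mult.assoc
  have bulk_phases: "cnj (E * p 1) * q 2 = 1" "cnj (E * q 2) * p 1 = 1"
    "cnj (E * p 0) * q 1 = 1" "cnj (E * q 0) * p (-1) = 1"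
    using minus_at[of 2 2] plus_at[of 1 1] minus_at[of 1 2] plus_at[of "-1" 1] s[of rpm] assms(1,2)
    by (simp_all add: simps)
  have defect_phases: "cnj (E * p (-1)) * p 0 = 1"
    "exp (\<i> * of_real \<nu>1') = cnj (E * p (-1)) * q 0 * exp (\<i> * of_real \<nu>1)"
    "exp (\<i> * of_real \<nu>2') = cnj (E * q 1) * p 0 * exp (\<i> * of_real \<nu>2)"
    using minus_at[of 0 1] minus_at[of 0 2] plus_at[of 0 1] s[of r0] assms(3,4)
    by (simp_all add: simps)
  have state_phases: "E' * p 0 = 1" "exp (\<i> * of_real \<theta>') = E' * q 0 * exp (\<i> * of_real \<theta>)"
    using state_at[of 1] state_at[of 2] s[of \<alpha>] assms(5,6) by (simp_all add: simps)
  note phases = defect_phases_gauge_invariant[OF units(1,3) bulk_phases defect_phases state_phases]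
  have "\<nu>1' = \<nu>1" "\<nu>2' = \<nu>2" "\<theta>' = \<theta>"
    using exp_i_of_real_inj[OF angles(4,1) phases(1)] exp_i_of_real_inj[OF angles(5,2) phases(2)]
      exp_i_of_real_inj[OF angles(6,3) phases(3)] .
  with moduli show ?thesis by simp
qed

theorem corollary3p4:
  shows "(\<forall>(U::kernel) (\<Phi>::complex^2). qw_one_defect U \<and> norm \<Phi> = 1 \<longrightarrow>
           (\<exists>rpm r0 \<alpha> \<nu>1 \<nu>2 \<theta>. 0 \<le> rpm \<and> rpm \<le> 1 \<and> 0 \<le> r0 \<and> r0 \<le> 1 \<and>
              0 \<le> \<alpha> \<and> \<alpha> \<le> 1 \<and>
              unit_equiv U \<Phi> (U_std rpm r0 \<nu>1 \<nu>2) (Phi_at \<alpha> \<theta>))) \<and>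
         (\<forall>rpm r0 \<nu>1 \<nu>2 \<alpha> \<theta> rpm' r0' \<nu>1' \<nu>2' \<alpha>' \<theta>'.
            0 < rpm \<and> rpm < 1 \<and> 0 < r0 \<and> r0 < 1 \<and> 0 < \<alpha> \<and> \<alpha> < 1 \<and>
            0 < rpm' \<and> rpm' < 1 \<and> 0 < r0' \<and> r0' < 1 \<and> 0 < \<alpha>' \<and> \<alpha>' < 1 \<and>
            \<nu>1 \<in> {0..<2*pi} \<and> \<nu>2 \<in> {0..<2*pi} \<and> \<theta> \<in> {0..<2*pi} \<and>
            \<nu>1' \<in> {0..<2*pi} \<and> \<nu>2' \<in> {0..<2*pi} \<and> \<theta>' \<in> {0..<2*pi} \<longrightarrow>
            (unit_equiv (U_std rpm r0 \<nu>1 \<nu>2) (Phi_at \<alpha> \<theta>)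
                        (U_std rpm' r0' \<nu>1' \<nu>2') (Phi_at \<alpha>' \<theta>')
             \<longleftrightarrow> rpm = rpm' \<and> r0 = r0' \<and> \<nu>1 = \<nu>1' \<and> \<nu>2 = \<nu>2' \<and> \<alpha> = \<alpha>' \<and> \<theta> = \<theta>'))"
proof (intro conjI allI impI, goal_cases)
  case (1 U \<Phi>)
  then show ?case using qw_one_defect_unit_equiv_U_std by blast
next
  case (2 rpm r0 \<nu>1 \<nu>2 \<alpha> \<theta> rpm' r0' \<nu>1' \<nu>2' \<alpha>' \<theta>')
  note params = this
  show ?case
  proof (rule iffI, goal_cases)
    case 1
    with params show ?case by (intro U_std_unit_equiv_imp_eq) auto
  next
    case 2
    then show ?case by (simp add: unit_equiv_refl)
  qed
qed

end
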